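(* For each $n\ge 4$, there exist connected graphs $G_1,G_2,G_3$, each of order $n$, such that $O_{\rm SR}(G_1)=\mathcal{M}$, $O_{\rm SR}(G_2)=\mathcal{N}$ and $O_{\rm SR}(G_3)=\mathcal{B}$.
   Context: All graphs are finite, simple and undirected. A set $S\subseteq V(G)$ is a strong resolving set of a connected graph $G$ if for all distinct $x,y\in V(G)$ there exists $z\in S$ such that $x$ lies on a $y$–$z$ geodesic or $y$ lies on an $x$–$z$ geodesic. The Maker–Breaker strong resolving game on $G$: Maker and Breaker alternately select a not-yet-chosen vertex of $G$; Maker wins if the vertices he selects contain a strong resolving set of $G$, Breaker wins otherwise. In the M-game Maker moves first, in the B-game Breaker moves first. $O_{\rm SR}(G)=\mathcal{M}$ if Maker has a winning strategy in both games, $\mathcal{B}$ if Breaker has a winning strategy in both, and $\mathcal{N}$ if the first player has a winning strategy in each. *)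

theory Defs
  imports Main
begin

definition simple_graph :: "'a set \<Rightarrow> ('a \<Rightarrow> 'a \<Rightarrow> bool) \<Rightarrow> bool" where
  "simple_graph V E \<longleftrightarrow> finite V \<and> (\<forall>x y. E x y \<longrightarrow> x \<in> V \<and> y \<in> V)
     \<and> (\<forall>x y. E x y \<longrightarrow> E y x) \<and> (\<forall>x. \<not> E x x)"

definition walk :: "'a set \<Rightarrow> ('a \<Rightarrow> 'a \<Rightarrow> bool) \<Rightarrow> 'a list \<Rightarrow> bool" where
  "walk V E xs \<longleftrightarrow> xs \<noteq> [] \<and> set xs \<subseteq> V \<and> successively E xs"

definition walk_betw :: "'a set \<Rightarrow> ('a \<Rightarrow> 'a \<Rightarrow> bool) \<Rightarrow> 'a \<Rightarrow> 'a \<Rightarrow> 'a list \<Rightarrow> bool" where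
  "walk_betw V E x y xs \<longleftrightarrow> walk V E xs \<and> hd xs = x \<and> last xs = y"

definition connected_graph :: "'a set \<Rightarrow> ('a \<Rightarrow> 'a \<Rightarrow> bool) \<Rightarrow> bool" where
  "connected_graph V E \<longleftrightarrow> simple_graph V E \<and> V \<noteq> {}
     \<and> (\<forall>x\<in>V. \<forall>y\<in>V. \<exists>xs. walk_betw V E x y xs)"

definition gdist :: "'a set \<Rightarrow> ('a \<Rightarrow> 'a \<Rightarrow> bool) \<Rightarrow> 'a \<Rightarrow> 'a \<Rightarrow> nat" where
  "gdist V E x y = (LEAST k. \<exists>xs. walk_betw V E x y xs \<and> length xs = Suc k)"

definition geodesic :: "'a set \<Rightarrow> ('a \<Rightarrow> 'a \<Rightarrow> bool) \<Rightarrow> 'a \<Rightarrow> 'a \<Rightarrow> 'a list \<Rightarrow> bool" where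
  "geodesic V E y z xs \<longleftrightarrow> walk_betw V E y z xs \<and> length xs = Suc (gdist V E y z)"

definition on_geodesic :: "'a set \<Rightarrow> ('a \<Rightarrow> 'a \<Rightarrow> bool) \<Rightarrow> 'a \<Rightarrow> 'a \<Rightarrow> 'a \<Rightarrow> bool" where
  "on_geodesic V E x y z \<longleftrightarrow> (\<exists>xs. geodesic V E y z xs \<and> x \<in> set xs)"

definition strong_resolving_set :: "'a set \<Rightarrow> ('a \<Rightarrow> 'a \<Rightarrow> bool) \<Rightarrow> 'a set \<Rightarrow> bool" where
  "strong_resolving_set V E S \<longleftrightarrow> S \<subseteq> V \<and>
     (\<forall>x\<in>V. \<forall>y\<in>V. x \<noteq> y \<longrightarrow>
        (\<exists>z\<in>S. on_geodesic V E x y z \<or> on_geodesic V E y x z))"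

definition maker_goal :: "'a set \<Rightarrow> ('a \<Rightarrow> 'a \<Rightarrow> bool) \<Rightarrow> 'a set \<Rightarrow> bool" where
  "maker_goal V E M \<longleftrightarrow> (\<exists>S\<subseteq>M. strong_resolving_set V E S)"

text \<open>Game positions: Maker's vertices M, Breaker's vertices B, and a flag which is
True iff it is Maker's turn.  maker_wins: Maker has a winning strategy from the
position; breaker_wins: Breaker has a winning strategy from the position.\<close>

inductive maker_wins :: "'a set \<Rightarrow> ('a \<Rightarrow> 'a \<Rightarrow> bool) \<Rightarrow> 'a set \<Rightarrow> 'a set \<Rightarrow> bool \<Rightarrow> bool"
  for V E where
  mw_goal: "maker_goal V E M \<Longrightarrow> maker_wins V E M B t"
| mw_maker: "x \<in> V - M - B \<Longrightarrow> maker_wins V E (insert x M) B False \<Longrightarrow> maker_wins V E M B True"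
| mw_breaker: "V - M - B \<noteq> {} \<Longrightarrow> (\<forall>x\<in>V - M - B. maker_wins V E M (insert x B) True)
     \<Longrightarrow> maker_wins V E M B False"

inductive breaker_wins :: "'a set \<Rightarrow> ('a \<Rightarrow> 'a \<Rightarrow> bool) \<Rightarrow> 'a set \<Rightarrow> 'a set \<Rightarrow> bool \<Rightarrow> bool"
  for V E where
  bw_end: "V - M - B = {} \<Longrightarrow> \<not> maker_goal V E M \<Longrightarrow> breaker_wins V E M B t"
| bw_breaker: "x \<in> V - M - B \<Longrightarrow> breaker_wins V E M (insert x B) True \<Longrightarrow> breaker_wins V E M B False"
| bw_maker: "V - M - B \<noteq> {} \<Longrightarrow> (\<forall>x\<in>V - M - B. breaker_wins V E (insert x M) B False)
     \<Longrightarrow> breaker_wins V E M B True"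

datatype outcome = Out_M | Out_N | Out_B

text \<open>O_SR(G) = o.  M-game: Maker moves first (flag True); B-game: Breaker first.\<close>
definition sr_outcome :: "'a set \<Rightarrow> ('a \<Rightarrow> 'a \<Rightarrow> bool) \<Rightarrow> outcome \<Rightarrow> bool" where
  "sr_outcome V E res \<longleftrightarrow> (case res of
      Out_M \<Rightarrow> maker_wins V E {} {} True \<and> maker_wins V E {} {} False
    | Out_B \<Rightarrow> breaker_wins V E {} {} True \<and> breaker_wins V E {} {} False
    | Out_N \<Rightarrow> maker_wins V E {} {} True \<and> breaker_wins V E {} {} False)"

end

theory Submission
  imports Defs
begin

text \<open>All three graphs are complete multipartite on \<open>{0..<n}\<close>. Two vertices of the same class
  are twins, and a strong resolving set contains one of any two twins; conversely a set
  containing all but one vertex of each class and meeting the class of one of any two vertices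
  outside it is strong resolving, since \<open>z\<close> in the class of \<open>x\<close> puts \<open>y\<close> on the geodesic
  \<open>[x, y, z]\<close>. So on the cocktail party graph (classes \<open>{0, 1}, {2, 3}, \<dots>\<close>) Maker wins both games
  by a pairing strategy. If instead the first class is \<open>{0, 1, 2}\<close>, Maker moving first claims
  \<open>0\<close> and pairs the rest, while Breaker moving first claims \<open>0\<close> and then one of \<open>1, 2\<close>. In
  \<open>K\<^sub>n\<close> any two vertices are twins, and Breaker wins by claiming two of them.\<close>

lemma geodesic_exists:
  assumes "walk_betw V E y z ws"
  shows "\<exists>xs. geodesic V E y z xs"
proof -
  have "ws \<noteq> []" using assms by (simp add: walk_betw_def walk_def)
  then have "\<exists>k xs. walk_betw V E y z xs \<and> length xs = Suc k"
    using assms by (intro exI[of _ "length ws - 1"] exI[of _ ws]) auto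
  then show ?thesis
    unfolding geodesic_def gdist_def by (rule LeastI_ex)
qed

lemma geodesic_length_le:
  assumes "geodesic V E y z xs" "walk_betw V E y z ys"
  shows "length xs \<le> length ys"
proof -
  have "ys \<noteq> []" using assms(2) by (simp add: walk_betw_def walk_def)
  moreover have "gdist V E y z \<le> length ys - 1"
    unfolding gdist_def by (rule Least_le) (use assms(2) \<open>ys \<noteq> []\<close> in auto)
  ultimately show ?thesis using assms(1) unfolding geodesic_def by (cases ys) auto
qed

lemma on_geodesic_endpoint:
  assumes "connected_graph V E" "y \<in> V" "z \<in> V"
  shows "on_geodesic V E z y z"
proof -
  obtain ws where "walk_betw V E y z ws"
    using assms unfolding connected_graph_def by blast
  then obtain xs where xs: "geodesic V E y z xs" by (blast dest: geodesic_exists)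
  then have "z \<in> set xs" by (auto simp: geodesic_def walk_betw_def walk_def)
  with xs show ?thesis unfolding on_geodesic_def by blast
qed

lemma on_geodesic_midpoint:
  assumes "E x y" "E y z" "\<not> E x z" "x \<noteq> z" "x \<in> V" "y \<in> V" "z \<in> V"
  shows "on_geodesic V E y x z"
proof -
  have walk: "walk_betw V E x z [x, y, z]"
    using assms by (simp add: walk_betw_def walk_def)
  have "gdist V E x z = 2"
    unfolding gdist_def
  proof (rule Least_equality)
    show "\<exists>xs. walk_betw V E x z xs \<and> length xs = Suc 2" using walk by auto
  next
    fix k assume "\<exists>xs. walk_betw V E x z xs \<and> length xs = Suc k"
    then obtain xs where "walk_betw V E x z xs" "length xs = Suc k" by blast
    moreover have "length xs \<ge> 3" if "walk_betw V E x z xs"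
      using that assms(3,4)
      by (cases xs; cases "tl xs"; cases "tl (tl xs)") (auto simp: walk_betw_def walk_def)
    ultimately show "2 \<le> k" by simp
  qed
  with walk show ?thesis
    unfolding on_geodesic_def geodesic_def by (intro exI[of _ "[x, y, z]"]) simp
qed

text \<open>A geodesic through such an \<open>x\<close> could be shortened by jumping from its start directly to
  the successor of \<open>x\<close>.\<close>

lemma dominated_not_on_geodesic:
  assumes geo: "geodesic V E y z xs" and "x \<noteq> y" "x \<noteq> z"
    and dom: "\<And>v. E x v \<Longrightarrow> v = y \<or> E y v"
  shows "x \<notin> set xs"
proof
  assume "x \<in> set xs"
  then obtain as bs where xs: "xs = as @ x # bs" by (meson split_list)
  have walk: "walk_betw V E y z xs" using geo by (simp add: geodesic_def)
  have "as \<noteq> []" using walk xs \<open>x \<noteq> y\<close> by (cases as) (auto simp: walk_betw_def)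
  moreover have "bs \<noteq> []" using walk xs \<open>x \<noteq> z\<close> by (auto simp: walk_betw_def)
  then obtain v cs where bs: "bs = v # cs" by (cases bs) auto
  ultimately have "E x v" and tail: "walk_betw V E v z (v # cs)" and yV: "y \<in> V"
    using walk xs by (auto simp: walk_betw_def walk_def successively_append_iff)
  have long: "length xs \<ge> length (v # cs) + 2"
    using xs bs \<open>as \<noteq> []\<close> by (cases as) auto
  from dom[OF \<open>E x v\<close>] have "walk_betw V E y z (v # cs) \<or> walk_betw V E y z (y # v # cs)"
    using tail yV by (auto simp: walk_betw_def walk_def)
  then show False using geodesic_length_le[OF geo] long by fastforce
qed

definition twins :: "('a \<Rightarrow> 'a \<Rightarrow> bool) \<Rightarrow> 'a \<Rightarrow> 'a \<Rightarrow> bool" where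
  "twins E x y \<longleftrightarrow> (\<forall>v. v \<noteq> x \<longrightarrow> v \<noteq> y \<longrightarrow> E x v = E y v)"

lemma strong_resolving_set_twins:
  assumes "simple_graph V E" "strong_resolving_set V E S"
    and "x \<in> V" "y \<in> V" "x \<noteq> y" "twins E x y"
  shows "x \<in> S \<or> y \<in> S"
proof (rule ccontr)
  assume unresolved: "\<not> (x \<in> S \<or> y \<in> S)"
  have dom: "E a v \<Longrightarrow> v = b \<or> E b v" if "twins E a b" for a b v
    using that assms(1) unfolding twins_def simple_graph_def by metis
  have "twins E y x" using assms(6) unfolding twins_def by metis
  note dom_xy = dom[OF assms(6)] and dom_yx = dom[OF this]
  obtain z where "z \<in> S" and z: "on_geodesic V E x y z \<or> on_geodesic V E y x z"
    using assms(2-5) unfolding strong_resolving_set_def by blast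
  with unresolved have "z \<noteq> x" "z \<noteq> y" by auto
  moreover have "\<not> on_geodesic V E x y z"
    using dominated_not_on_geodesic[of V E y z _ x] dom_xy assms(5) \<open>z \<noteq> x\<close>
    unfolding on_geodesic_def by blast
  moreover have "\<not> on_geodesic V E y x z"
    using dominated_not_on_geodesic[of V E x z _ y] dom_yx assms(5) \<open>z \<noteq> y\<close>
    unfolding on_geodesic_def by blast
  ultimately show False using z by blast
qed

lemma maker_goal_contains_twin:
  assumes "simple_graph V E" "maker_goal V E M"
    and "x \<in> V" "y \<in> V" "x \<noteq> y" "twins E x y"
  shows "x \<in> M \<or> y \<in> M"
  using assms strong_resolving_set_twins[of V E _ x y] unfolding maker_goal_def by blast

definition complete_multipartite :: "'a set \<Rightarrow> ('a \<Rightarrow> 'b) \<Rightarrow> 'a \<Rightarrow> 'a \<Rightarrow> bool" where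
  "complete_multipartite V k x y \<longleftrightarrow> x \<in> V \<and> y \<in> V \<and> k x \<noteq> k y"

lemma connected_complete_multipartite:
  assumes "finite V" "a \<in> V" "b \<in> V" "k a \<noteq> k b"
  shows "connected_graph V (complete_multipartite V k)"
proof -
  have "\<exists>xs. walk_betw V (complete_multipartite V k) x y xs" if "x \<in> V" "y \<in> V" for x y
  proof (cases "k x = k y")
    case True
    obtain w where "w \<in> V" "k w \<noteq> k x" using assms(2-4) by metis
    then have "walk_betw V (complete_multipartite V k) x y [x, w, y]"
      using that True by (auto simp: walk_betw_def walk_def complete_multipartite_def)
    then show ?thesis by blast
  next
    case False
    then have "walk_betw V (complete_multipartite V k) x y [x, y]"
      using that by (auto simp: walk_betw_def walk_def complete_multipartite_def)
    then show ?thesis by blast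
  qed
  with assms(1,2) show ?thesis
    by (auto simp: connected_graph_def simple_graph_def complete_multipartite_def)
qed

lemma twins_same_class:
  "x \<in> V \<Longrightarrow> y \<in> V \<Longrightarrow> k x = k y \<Longrightarrow> twins (complete_multipartite V k) x y"
  by (simp add: twins_def complete_multipartite_def)

lemma twins_inj_on:
  "x \<in> V \<Longrightarrow> y \<in> V \<Longrightarrow> inj_on k V \<Longrightarrow> twins (complete_multipartite V k) x y"
  by (auto simp: twins_def complete_multipartite_def dest: inj_onD)

lemma strong_resolving_set_complete_multipartite:
  assumes conn: "connected_graph V (complete_multipartite V k)" and "S \<subseteq> V"
    and sep: "\<And>x y. x \<in> V - S \<Longrightarrow> y \<in> V - S \<Longrightarrow> x \<noteq> y \<Longrightarrow>
      k x \<noteq> k y \<and> (\<exists>z\<in>S. k z = k x \<or> k z = k y)"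
  shows "strong_resolving_set V (complete_multipartite V k) S"
  unfolding strong_resolving_set_def
proof (intro conjI ballI impI \<open>S \<subseteq> V\<close>)
  let ?G = "complete_multipartite V k"
  fix x y assume xy: "x \<in> V" "y \<in> V" "x \<noteq> y"
  show "\<exists>z\<in>S. on_geodesic V ?G x y z \<or> on_geodesic V ?G y x z"
  proof (cases "x \<in> S \<or> y \<in> S")
    case True
    then show ?thesis using on_geodesic_endpoint[OF conn] xy by blast
  next
    case False
    with xy sep obtain z where "z \<in> S" "k x \<noteq> k y" and z: "k z = k x \<or> k z = k y" by blast
    have "z \<in> V" "z \<noteq> x" "z \<noteq> y" using \<open>z \<in> S\<close> \<open>S \<subseteq> V\<close> False by auto
    note facts = this \<open>k x \<noteq> k y\<close> xy
    from z show ?thesis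
    proof
      assume "k z = k x"
      with facts have "on_geodesic V ?G y x z"
        by (intro on_geodesic_midpoint) (auto simp: complete_multipartite_def)
      with \<open>z \<in> S\<close> show ?thesis by blast
    next
      assume "k z = k y"
      with facts have "on_geodesic V ?G x y z"
        by (intro on_geodesic_midpoint) (auto simp: complete_multipartite_def)
      with \<open>z \<in> S\<close> show ?thesis by blast
    qed
  qed
qed

lemma strong_resolving_set_complete_multipartite_pairing:
  assumes conn: "connected_graph V (complete_multipartite V k)" and "M \<subseteq> V"
    and cover: "\<forall>x\<in>V. p x \<in> V \<longrightarrow> x \<in> M \<or> p x \<in> M"
    and same_class: "\<And>x. k (p x) = k x"
    and pairs: "\<And>x y. x \<in> V - M \<Longrightarrow> y \<in> V - M \<Longrightarrow> x \<noteq> y \<Longrightarrow> k x = k y \<Longrightarrow> y = p x"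
    and unpaired: "\<And>x y. x \<in> V \<Longrightarrow> y \<in> V \<Longrightarrow> x \<noteq> y \<Longrightarrow> p x \<in> V \<or> p y \<in> V"
  shows "strong_resolving_set V (complete_multipartite V k) M"
proof (rule strong_resolving_set_complete_multipartite[OF conn \<open>M \<subseteq> V\<close>])
  fix x y assume xy: "x \<in> V - M" "y \<in> V - M" "x \<noteq> y"
  have claimed: "p x \<in> M" if "x \<in> V - M" "p x \<in> V" for x using cover that by blast
  have "k x \<noteq> k y"
  proof
    assume "k x = k y"
    then have "y = p x" using pairs[OF xy] by blast
    then show False using claimed[of x] xy by blast
  qed
  moreover have "\<exists>z\<in>M. k z = k x \<or> k z = k y"
  proof (cases "p x \<in> V")
    case True
    then show ?thesis using claimed[of x] xy(1) same_class[of x] by blast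
  next
    case False
    then have "p y \<in> V" using unpaired xy by blast
    then show ?thesis using claimed[of y] xy(2) same_class[of y] by blast
  qed
  ultimately show "k x \<noteq> k y \<and> (\<exists>z\<in>M. k z = k x \<or> k z = k y)" ..
qed

lemma breaker_wins_if_blocked:
  assumes "finite V" "M \<inter> B = {}" "\<And>M'. M' \<inter> B = {} \<Longrightarrow> \<not> maker_goal V E M'"
  shows "breaker_wins V E M B t"
  using assms(2,3)
proof (induction "card (V - M - B)" arbitrary: M B t rule: less_induct)
  case (less M B t)
  show ?case
  proof (cases "V - M - B = {}")
    case True
    then show ?thesis using less.prems by (blast intro: bw_end)
  next
    case False
    have fewer: "card (V - M' - B') < card (V - M - B)" if "V - M' - B' \<subset> V - M - B" for M' B'
      using that assms(1) by (simp add: psubset_card_mono)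
    have step: "breaker_wins V E M' B' t'"
      if "V - M' - B' \<subset> V - M - B" "M' \<inter> B' = {}" "B \<subseteq> B'" for M' B' t'
    proof (rule less.hyps[OF fewer[OF that(1)] that(2)])
      show "\<And>M''. M'' \<inter> B' = {} \<Longrightarrow> \<not> maker_goal V E M''"
        using less.prems(2) that(3) by blast
    qed
    show ?thesis
    proof (cases t)
      case True
      have "\<forall>x\<in>V - M - B. breaker_wins V E (insert x M) B False"
        using less.prems(1) by (blast intro: step)
      from bw_maker[OF False this] True show ?thesis by simp
    next
      case f: False
      obtain x where x: "x \<in> V - M - B" using False by blast
      then have "breaker_wins V E M (insert x B) True"
        using less.prems(1) by (blast intro: step)
      from bw_breaker[OF x this] f show ?thesis by simp
    qed
  qed
qed

text \<open>Maker's pairing strategy: whenever Breaker claims a vertex whose partner is still free,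
  Maker claims the partner.\<close>

lemma maker_wins_pairing:
  assumes "finite V" and involution: "\<And>x. p (p x) = x" and "M \<subseteq> V"
    and "\<And>x. x \<in> V - M \<Longrightarrow> p x \<noteq> x"
    and "\<And>x. x \<in> B \<Longrightarrow> p x \<in> V \<Longrightarrow> p x \<in> M"
    and "\<And>M'. M \<subseteq> M' \<Longrightarrow> M' \<subseteq> V \<Longrightarrow> \<forall>x\<in>V. p x \<in> V \<longrightarrow> x \<in> M' \<or> p x \<in> M'
      \<Longrightarrow> maker_goal V E M'"
  shows "maker_wins V E M B t"
  using assms(3-6)
proof (induction "card (V - M - B)" arbitrary: M B t rule: less_induct)
  case (less M B t)
  have step: "maker_wins V E M' B' t'"
    if "V - M' - B' \<subset> V - M - B" "M \<subseteq> M'" "M' \<subseteq> V"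
      "\<And>x. x \<in> B' \<Longrightarrow> p x \<in> V \<Longrightarrow> p x \<in> M'" for M' B' t'
  proof (rule less.hyps)
    show "card (V - M' - B') < card (V - M - B)"
      using that(1) \<open>finite V\<close> by (simp add: psubset_card_mono)
    show "\<And>x. x \<in> V - M' \<Longrightarrow> p x \<noteq> x" using less.prems(2) that(2) by blast
    show "\<And>M''. M' \<subseteq> M'' \<Longrightarrow> M'' \<subseteq> V \<Longrightarrow> \<forall>x\<in>V. p x \<in> V \<longrightarrow> x \<in> M'' \<or> p x \<in> M''
      \<Longrightarrow> maker_goal V E M''" using less.prems(4) that(2) by blast
  qed (use that in auto)
  show ?case
  proof (cases "V - M - B = {}")
    case True
    then have "\<forall>x\<in>V. p x \<in> V \<longrightarrow> x \<in> M \<or> p x \<in> M" using less.prems(3) by blast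
    then show ?thesis using less.prems(1,4) by (blast intro: mw_goal)
  next
    case False
    show ?thesis
    proof (cases t)
      case True
      obtain y where y: "y \<in> V - M - B" using False by blast
      then have "maker_wins V E (insert y M) B False"
        using less.prems(1,3) by (intro step) auto
      from mw_maker[OF y this] True show ?thesis by simp
    next
      case f: False
      have "maker_wins V E M (insert x B) True" if x: "x \<in> V - M - B" for x
      proof (cases "p x \<in> V - M")
        case True
        have "p x \<noteq> x" using less.prems(2) x by blast
        moreover have "p x \<notin> B" using less.prems(3)[of "p x"] involution x by auto
        ultimately have px: "p x \<in> V - M - insert x B" using True by blast
        have "maker_wins V E (insert (p x) M) (insert x B) False"
          using less.prems(1,3) x px by (intro step) auto
        from mw_maker[OF px this] show ?thesis .
      next
        case False
        then show ?thesis using less.prems(1,3) x by (intro step) auto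
      qed
      with mw_breaker[of V M B] \<open>V - M - B \<noteq> {}\<close> f show ?thesis by simp
    qed
  qed
qed

lemma breaker_wins_two_of_three:
  assumes "finite V" "C \<subseteq> V" "M \<inter> B = {}"
    and all_but_one: "\<And>M' x y. maker_goal V E M' \<Longrightarrow> x \<in> C \<Longrightarrow> y \<in> C \<Longrightarrow> x \<noteq> y \<Longrightarrow>
      x \<in> M' \<or> y \<in> M'"
    and three: "3 \<le> card (C - M - B)"
  shows "breaker_wins V E M B False"
proof -
  have free: "\<exists>c. c \<in> C - M - B - X" if "finite X" "card X \<le> 2" for X
  proof -
    have "0 < card (C - M - B - X)"
      using diff_card_le_card_Diff[OF that(1), of "C - M - B"] three that(2) by linarith
    then show ?thesis by (auto simp: card_gt_0_iff)
  qed
  obtain a where a: "a \<in> C - M - B" using free[of "{}"] by auto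
  have "breaker_wins V E M (insert a B) True"
  proof (rule bw_maker)
    show "V - M - insert a B \<noteq> {}" using free[of "{a}"] assms(2) by auto
    show "\<forall>x\<in>V - M - insert a B. breaker_wins V E (insert x M) (insert a B) False"
    proof
      fix x assume x: "x \<in> V - M - insert a B"
      have "card {a, x} \<le> 2" by (cases "a = x") auto
      then obtain b where b: "b \<in> C - M - B - {a, x}" using free[of "{a, x}"] by auto
      have "breaker_wins V E (insert x M) (insert b (insert a B)) True"
      proof (rule breaker_wins_if_blocked[OF assms(1)])
        show "insert x M \<inter> insert b (insert a B) = {}" using a x b assms(3) by auto
        show "\<And>M'. M' \<inter> insert b (insert a B) = {} \<Longrightarrow> \<not> maker_goal V E M'"
          using all_but_one[of _ a b] a b by blast
      qed
      then show "breaker_wins V E (insert x M) (insert a B) False"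
        using b x assms(2) by (intro bw_breaker[of b]) auto
    qed
  qed
  then show ?thesis using a assms(2) by (intro bw_breaker[of a]) auto
qed

lemma breaker_wins_two_of_four:
  assumes "finite V" "C \<subseteq> V" "M \<inter> B = {}"
    and all_but_one: "\<And>M' x y. maker_goal V E M' \<Longrightarrow> x \<in> C \<Longrightarrow> y \<in> C \<Longrightarrow> x \<noteq> y \<Longrightarrow>
      x \<in> M' \<or> y \<in> M'"
    and four: "4 \<le> card (C - M - B)"
  shows "breaker_wins V E M B True"
proof (rule bw_maker)
  from four have "C - M - B \<noteq> {}" by (metis card.empty not_numeral_le_zero)
  then show "V - M - B \<noteq> {}" using assms(2) by blast
  show "\<forall>x\<in>V - M - B. breaker_wins V E (insert x M) B False"
  proof
    fix x assume x: "x \<in> V - M - B"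
    have "C - insert x M - B = C - M - B - {x}" by blast
    then have "3 \<le> card (C - insert x M - B)"
      using diff_card_le_card_Diff[of "{x}" "C - M - B"] four by simp
    then show "breaker_wins V E (insert x M) B False"
      using x assms(3) by (intro breaker_wins_two_of_three[OF assms(1,2) _ all_but_one]) auto
  qed
qed

abbreviation cocktail_party :: "nat \<Rightarrow> nat \<Rightarrow> nat \<Rightarrow> bool" where
  "cocktail_party n \<equiv> complete_multipartite {0..<n} (\<lambda>x. x div 2)"

text \<open>Classes \<open>{0, 1, 2}, {3, 4}, {5, 6}, \<dots>\<close>; the truncated subtraction \<open>0 - 1 = 0\<close> puts \<open>0\<close>
  into the first class.\<close>

abbreviation cocktail_party_triple :: "nat \<Rightarrow> nat \<Rightarrow> nat \<Rightarrow> bool" where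
  "cocktail_party_triple n \<equiv> complete_multipartite {0..<n} (\<lambda>x. (x - 1) div 2)"

abbreviation complete_graph :: "nat \<Rightarrow> nat \<Rightarrow> nat \<Rightarrow> bool" where
  "complete_graph n \<equiv> complete_multipartite {0..<n} id"

lemma connected_cocktail_party: "3 \<le> n \<Longrightarrow> connected_graph {0..<n} (cocktail_party n)"
  by (rule connected_complete_multipartite[of _ 0 2]) auto

lemma connected_cocktail_party_triple: "4 \<le> n \<Longrightarrow> connected_graph {0..<n} (cocktail_party_triple n)"
  by (rule connected_complete_multipartite[of _ 0 3]) auto

lemma connected_complete_graph: "2 \<le> n \<Longrightarrow> connected_graph {0..<n} (complete_graph n)"
  by (rule connected_complete_multipartite[of _ 0 1]) auto

lemma div2_eq_imp_partner:
  "x \<noteq> y \<Longrightarrow> x div 2 = y div 2 \<Longrightarrow> y = (if even x then Suc x else x - 1)" for x y :: nat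
  by (auto elim!: oddE evenE; presburger)

lemma pred_div2_eq_imp_partner:
  "x \<noteq> 0 \<Longrightarrow> y \<noteq> 0 \<Longrightarrow> x \<noteq> y \<Longrightarrow> (x - 1) div 2 = (y - 1) div 2 \<Longrightarrow>
    y = (if odd x then Suc x else x - 1)" for x y :: nat
  by (auto elim!: oddE evenE; presburger)

lemma sr_outcome_cocktail_party:
  assumes "3 \<le> n"
  shows "sr_outcome {0..<n} (cocktail_party n) Out_M"
proof -
  let ?p = "\<lambda>x::nat. if even x then Suc x else x - 1"
  have "maker_wins {0..<n} (cocktail_party n) {} {} t" for t
  proof (rule maker_wins_pairing[where p = ?p])
    fix M assume "{} \<subseteq> M" and M: "M \<subseteq> {0..<n}"
      and cover: "\<forall>x\<in>{0..<n}. ?p x \<in> {0..<n} \<longrightarrow> x \<in> M \<or> ?p x \<in> M"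
    have "strong_resolving_set {0..<n} (cocktail_party n) M"
    proof (rule strong_resolving_set_complete_multipartite_pairing[OF _ M cover])
      show "connected_graph {0..<n} (cocktail_party n)" using assms by (rule connected_cocktail_party)
      show "?p x div 2 = x div 2" for x by (auto elim!: oddE evenE)
      show "x \<noteq> y \<Longrightarrow> x div 2 = y div 2 \<Longrightarrow> y = ?p x" for x y
        by (rule div2_eq_imp_partner)
      show "?p x \<in> {0..<n} \<or> ?p y \<in> {0..<n}" if "x \<in> {0..<n}" "y \<in> {0..<n}" "x \<noteq> y" for x y
        using that by auto
    qed
    then show "maker_goal {0..<n} (cocktail_party n) M" unfolding maker_goal_def by blast
  qed (auto elim: oddE)
  then show ?thesis by (simp add: sr_outcome_def)
qed

lemma sr_outcome_cocktail_party_triple: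
  assumes "4 \<le> n"
  shows "sr_outcome {0..<n} (cocktail_party_triple n) Out_N"
proof -
  let ?G = "cocktail_party_triple n"
  let ?p = "\<lambda>x::nat. if odd x then Suc x else x - 1"
  have conn: "connected_graph {0..<n} ?G" using assms by (rule connected_cocktail_party_triple)
  have same_class: "(?p x - 1) div 2 = (x - 1) div 2" for x
    by (auto elim!: oddE evenE; presburger)
  have unpaired: "?p x \<in> {0..<n} \<or> ?p y \<in> {0..<n}"
    if "x \<in> {0..<n}" "y \<in> {0..<n}" "x \<noteq> y" for x y
    using that by auto
  have "maker_wins {0..<n} ?G {0} {} False"
  proof (rule maker_wins_pairing[where p = ?p])
    fix M assume "{0} \<subseteq> M" and M: "M \<subseteq> {0..<n}"
      and cover: "\<forall>x\<in>{0..<n}. ?p x \<in> {0..<n} \<longrightarrow> x \<in> M \<or> ?p x \<in> M"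
    have pairs: "y = ?p x"
      if "x \<in> {0..<n} - M" "y \<in> {0..<n} - M" "x \<noteq> y" "(x - 1) div 2 = (y - 1) div 2" for x y
    proof -
      have "x \<noteq> 0" "y \<noteq> 0"
        using that(1,2) \<open>{0} \<subseteq> M\<close> by (metis DiffD2 insert_subset)+
      with that(3,4) show ?thesis by (intro pred_div2_eq_imp_partner)
    qed
    have "strong_resolving_set {0..<n} ?G M"
      using same_class pairs unpaired
      by (rule strong_resolving_set_complete_multipartite_pairing[OF conn M cover])
    then show "maker_goal {0..<n} ?G M" unfolding maker_goal_def by blast
  qed (use assms in auto)
  then have "maker_wins {0..<n} ?G {} {} True" using assms by (intro mw_maker[of 0]) auto
  moreover have "breaker_wins {0..<n} ?G {} {} False"
  proof (rule breaker_wins_two_of_three[where C = "{0, 1, 2}"])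
    have simple: "simple_graph {0..<n} ?G" using conn by (simp add: connected_graph_def)
    show "x \<in> M \<or> y \<in> M"
      if "maker_goal {0..<n} ?G M" "x \<in> {0, 1, 2}" "y \<in> {0, 1, 2}" "x \<noteq> y" for M x y
    proof (rule maker_goal_contains_twin[OF simple that(1) _ _ that(4)])
      show "twins ?G x y" using that assms by (intro twins_same_class) auto
    qed (use that assms in auto)
  qed (use assms in auto)
  ultimately show ?thesis by (simp add: sr_outcome_def)
qed

lemma sr_outcome_complete_graph:
  assumes "4 \<le> n"
  shows "sr_outcome {0..<n} (complete_graph n) Out_B"
proof -
  have "simple_graph {0..<n} (complete_graph n)"
    using connected_complete_graph assms by (simp add: connected_graph_def)
  then have all_but_one: "x \<in> M \<or> y \<in> M"
    if "maker_goal {0..<n} (complete_graph n) M" "x \<in> {0..<n}" "y \<in> {0..<n}" "x \<noteq> y" for M x y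
    using that by (intro maker_goal_contains_twin[OF _ that] twins_inj_on) auto
  have "breaker_wins {0..<n} (complete_graph n) {} {} True"
    by (rule breaker_wins_two_of_four[OF _ _ _ all_but_one]) (use assms in auto)
  moreover have "breaker_wins {0..<n} (complete_graph n) {} {} False"
    by (rule breaker_wins_two_of_three[OF _ _ _ all_but_one]) (use assms in auto)
  ultimately show ?thesis by (simp add: sr_outcome_def)
qed

theorem mainTheorem4:
  fixes n :: nat
  assumes "n \<ge> 4"
  shows "\<exists>(V1::nat set) E1 (V2::nat set) E2 (V3::nat set) E3.
     connected_graph V1 E1 \<and> card V1 = n \<and> sr_outcome V1 E1 Out_M \<and>
     connected_graph V2 E2 \<and> card V2 = n \<and> sr_outcome V2 E2 Out_N \<and>
     connected_graph V3 E3 \<and> card V3 = n \<and> sr_outcome V3 E3 Out_B"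
proof -
  have "3 \<le> n" "2 \<le> n" using assms by simp_all
  have "connected_graph {0..<n} (cocktail_party n)" "sr_outcome {0..<n} (cocktail_party n) Out_M"
    by (intro connected_cocktail_party sr_outcome_cocktail_party \<open>3 \<le> n\<close>)+
  moreover have "connected_graph {0..<n} (cocktail_party_triple n)"
    "sr_outcome {0..<n} (cocktail_party_triple n) Out_N"
    by (intro connected_cocktail_party_triple sr_outcome_cocktail_party_triple assms)+
  moreover have "connected_graph {0..<n} (complete_graph n)"
    "sr_outcome {0..<n} (complete_graph n) Out_B"
    by (intro connected_complete_graph sr_outcome_complete_graph assms \<open>2 \<le> n\<close>)+
  moreover have "card {0..<n} = n" by simp
  ultimately show ?thesis by blast
qed

end
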